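(* Let $G$ be a countable group with a central subgroup $Z$ of finite index, and let $T$ be a left-transversal for $Z$ in $G$. If $\mu$ is a finitely additive left-invariant mean on $G$ then $\textup{dc}_\mu(G)=\frac{1}{|G/Z|}\sum_{t\in T}\frac{1}{[G:C_G(t)]}$. Moreover, if $M=(\mu_n)_{n=1}^\infty$ is a sequence of probability measures on $G$ that measures index uniformly then $\textup{dc}_M(G)=\frac{1}{|G/Z|}\sum_{t\in T}\frac{1}{[G:C_G(t)]}$, and the $\limsup$ in the definition of $\textup{dc}_M(G)$ is actually a limit.
   Context: A finitely additive left-invariant mean is a positive normalised left-invariant linear functional on $\ell^\infty(G)$, $\mu(X)=\int1_X\,d\mu$, and $\textup{dc}_\mu(G)=\int_x\int_y1_{\{xy=yx\}}\,d\mu(x)\,d\mu(y)$. $M$ measures index uniformly if $\mu_n(xH)\to1/[G:H]$ uniformly over $x\in G$ and subgroups $H$ (with $1/[G:H]=0$ for infinite index); $\textup{dc}_M(G)=\limsup_n(\mu_n\times\mu_n)(\{(x,y):xy=yx\})$. *)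

theory Defs
  imports "HOL-Algebra.Coset" "HOL-Algebra.Left_Coset" "HOL-Probability.Probability_Mass_Function"
begin

definition centralizer :: "('a, 'b) monoid_scheme \<Rightarrow> 'a \<Rightarrow> 'a set" where
  "centralizer G t = {x \<in> carrier G. x \<otimes>\<^bsub>G\<^esub> t = t \<otimes>\<^bsub>G\<^esub> x}"

definition center :: "('a, 'b) monoid_scheme \<Rightarrow> 'a set" where
  "center G = {z \<in> carrier G. \<forall>x\<in>carrier G. z \<otimes>\<^bsub>G\<^esub> x = x \<otimes>\<^bsub>G\<^esub> z}"

definition inv_index :: "('a, 'b) monoid_scheme \<Rightarrow> 'a set \<Rightarrow> real" where
  "inv_index G H = (if finite (lcosets\<^bsub>G\<^esub> H) then 1 / real (card (lcosets\<^bsub>G\<^esub> H)) else 0)"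

definition left_transversal :: "('a, 'b) monoid_scheme \<Rightarrow> 'a set \<Rightarrow> 'a set \<Rightarrow> bool" where
  "left_transversal G Z T \<longleftrightarrow> T \<subseteq> carrier G \<and> (\<forall>C\<in>lcosets\<^bsub>G\<^esub> Z. \<exists>!t. t \<in> T \<and> t \<in> C)"

definition bounded_on :: "('a, 'b) monoid_scheme \<Rightarrow> ('a \<Rightarrow> real) \<Rightarrow> bool" where
  "bounded_on G f \<longleftrightarrow> (\<exists>B. \<forall>x\<in>carrier G. \<bar>f x\<bar> \<le> B)"

text \<open>Finitely additive left-invariant mean: positive, normalised, left-invariant linear
  functional on l-infinity(G) (bounded real functions on the carrier).\<close>
definition left_invariant_mean :: "('a, 'b) monoid_scheme \<Rightarrow> (('a \<Rightarrow> real) \<Rightarrow> real) \<Rightarrow> bool" where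
  "left_invariant_mean G m \<longleftrightarrow>
     (\<forall>f g a b. bounded_on G f \<longrightarrow> bounded_on G g \<longrightarrow>
         m (\<lambda>x. a * f x + b * g x) = a * m f + b * m g) \<and>
     (\<forall>f. bounded_on G f \<longrightarrow> (\<forall>x\<in>carrier G. f x \<ge> 0) \<longrightarrow> m f \<ge> 0) \<and>
     m (\<lambda>x. 1) = 1 \<and>
     (\<forall>f g. bounded_on G f \<longrightarrow> g \<in> carrier G \<longrightarrow> m (\<lambda>x. f (g \<otimes>\<^bsub>G\<^esub> x)) = m f)"

definition dc_mean :: "('a, 'b) monoid_scheme \<Rightarrow> (('a \<Rightarrow> real) \<Rightarrow> real) \<Rightarrow> real" where
  "dc_mean G m = m (\<lambda>y. m (\<lambda>x. if x \<otimes>\<^bsub>G\<^esub> y = y \<otimes>\<^bsub>G\<^esub> x then 1 else 0))"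

definition comm_prob :: "('a, 'b) monoid_scheme \<Rightarrow> 'a pmf \<Rightarrow> real" where
  "comm_prob G p = measure_pmf.prob (pair_pmf p p) {(x, y). x \<otimes>\<^bsub>G\<^esub> y = y \<otimes>\<^bsub>G\<^esub> x}"

definition dc_seq :: "('a, 'b) monoid_scheme \<Rightarrow> (nat \<Rightarrow> 'a pmf) \<Rightarrow> ereal" where
  "dc_seq G M = limsup (\<lambda>n. ereal (comm_prob G (M n)))"

definition measures_index_uniformly :: "('a, 'b) monoid_scheme \<Rightarrow> (nat \<Rightarrow> 'a pmf) \<Rightarrow> bool" where
  "measures_index_uniformly G M \<longleftrightarrow>
     (\<forall>e>0. \<exists>N. \<forall>n\<ge>N. \<forall>x\<in>carrier G. \<forall>H. subgroup H G \<longrightarrow>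
         \<bar>measure_pmf.prob (M n) (x <#\<^bsub>G\<^esub> H) - inv_index G H\<bar> < e)"

end

theory Submission
  imports Defs
begin

text \<open>The function \<open>y \<mapsto> 1/[G:C_G(y)]\<close> is right invariant under the central subgroup \<open>Z\<close>,
  because \<open>C_G(yz) = C_G(y)\<close>; so it is a finite combination \<open>\<Sum>\<^sub>t c\<^sub>t 1\<^bsub>tZ\<^esub>\<close> of indicators
  of the cosets of \<open>Z\<close>. A left-invariant mean gives every subgroup \<open>H\<close> the mass \<open>1/[G:H]\<close>:
  its left cosets are disjoint translates of \<open>H\<close> with total mass at most 1, and they cover \<open>G\<close>
  when there are finitely many. Hence the inner integral in \<open>dc\<^sub>\<mu>(G)\<close> is \<open>1/[G:C_G(y)]\<close> and the
  outer one is \<open>\<Sum>\<^sub>t c\<^sub>t/[G:Z]\<close>. For a sequence measuring index uniformly, \<open>\<mu>\<^sub>n(C_G(x))\<close> is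
  uniformly close to \<open>1/[G:C_G(x)]\<close> and \<open>\<mu>\<^sub>n(tZ) \<longrightarrow> 1/[G:Z]\<close>, which gives the same value as a
  limit.\<close>

lemma measure_pair_pmf:
  "measure_pmf.prob (pair_pmf p q) A = (\<integral>x. measure_pmf.prob q {y. (x, y) \<in> A} \<partial>p)"
proof -
  have "pair_pmf p q = bind_pmf p (\<lambda>x. map_pmf (\<lambda>y. (x, y)) q)"
    by (simp add: pair_pmf_def map_pmf_def)
  then have "measure_pmf.prob (pair_pmf p q) A
      = measure (measure_pmf p \<bind> (\<lambda>x. measure_pmf (map_pmf (\<lambda>y. (x, y)) q))) A"
    by (simp add: measure_pmf_bind)
  also have "\<dots> = (\<integral>x. measure (measure_pmf (map_pmf (\<lambda>y. (x, y)) q)) A \<partial>p)"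
    by (rule measure_pmf.measure_bind[where N="count_space UNIV"])
      (auto simp: measure_pmf_in_subprob_algebra)
  finally show ?thesis
    by (simp add: vimage_def)
qed

lemma integral_pmf_dist_le:
  fixes f g :: "'a \<Rightarrow> real"
  assumes "\<And>x. \<bar>f x\<bar> \<le> B" and "\<And>x. \<bar>g x\<bar> \<le> B"
    and close: "\<And>x. x \<in> set_pmf p \<Longrightarrow> \<bar>f x - g x\<bar> \<le> e"
  shows "\<bar>(\<integral>x. f x \<partial>p) - (\<integral>x. g x \<partial>p)\<bar> \<le> e"
proof -
  have int: "integrable p f" "integrable p g"
    using assms(1,2) by (auto intro: measure_pmf.integrable_const_bound[where B = B])
  have ae: "AE x in p. f x - g x \<le> e" "AE x in p. - e \<le> f x - g x"
    by (auto simp: AE_measure_pmf_iff dest!: close)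
  have "(\<integral>x. f x - g x \<partial>p) \<le> e"
    by (rule measure_pmf.integral_le_const) (use int ae in auto)
  moreover have "- e \<le> (\<integral>x. f x - g x \<partial>p)"
    by (rule measure_pmf.integral_ge_const) (use int ae in auto)
  ultimately show ?thesis
    using int by (simp add: abs_le_iff)
qed

lemma bounded_onI: "(\<And>x. x \<in> carrier G \<Longrightarrow> \<bar>f x\<bar> \<le> B) \<Longrightarrow> bounded_on G f"
  unfolding bounded_on_def by blast

lemma bounded_on_cong:
  "bounded_on G f \<Longrightarrow> (\<And>x. x \<in> carrier G \<Longrightarrow> f x = g x) \<Longrightarrow> bounded_on G g"
  unfolding bounded_on_def by metis

lemma bounded_on_indicator: "bounded_on G (indicator A :: _ \<Rightarrow> real)"
  by (rule bounded_onI[where B = 1]) (simp add: indicator_def)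

lemma bounded_on_lincomb:
  assumes "bounded_on G f" and "bounded_on G g"
  shows "bounded_on G (\<lambda>x. a * f x + b * g x)"
proof -
  obtain A B where "\<forall>x\<in>carrier G. \<bar>f x\<bar> \<le> A" "\<forall>x\<in>carrier G. \<bar>g x\<bar> \<le> B"
    using assms unfolding bounded_on_def by blast
  then have "\<bar>a * f x + b * g x\<bar> \<le> \<bar>a\<bar> * A + \<bar>b\<bar> * B" if "x \<in> carrier G" for x
    using that abs_triangle_ineq[of "a * f x" "b * g x"]
      mult_left_mono[of "\<bar>f x\<bar>" A "\<bar>a\<bar>"] mult_left_mono[of "\<bar>g x\<bar>" B "\<bar>b\<bar>"]
    by (simp add: abs_mult)
  then show ?thesis
    by (rule bounded_onI)
qed

lemma bounded_on_sum:
  "(\<And>i. i \<in> S \<Longrightarrow> bounded_on G (f i)) \<Longrightarrow> bounded_on G (\<lambda>x. \<Sum>i\<in>S. f i x)"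
proof (induction S rule: infinite_finite_induct)
  case (insert i S)
  then show ?case
    using bounded_on_lincomb[of G "f i" "\<lambda>x. \<Sum>i\<in>S. f i x" 1 1] by simp
qed (auto intro: bounded_onI[where B = 0])

context
  fixes G :: "('a, 'b) monoid_scheme" and m :: "('a \<Rightarrow> real) \<Rightarrow> real"
  assumes mean: "left_invariant_mean G m"
begin

lemma mean_lincomb:
  "bounded_on G f \<Longrightarrow> bounded_on G g \<Longrightarrow> m (\<lambda>x. a * f x + b * g x) = a * m f + b * m g"
  using mean unfolding left_invariant_mean_def by blast

lemma mean_nonneg: "bounded_on G f \<Longrightarrow> (\<And>x. x \<in> carrier G \<Longrightarrow> 0 \<le> f x) \<Longrightarrow> 0 \<le> m f"
  using mean unfolding left_invariant_mean_def by blast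

lemma mean_one: "m (\<lambda>x. 1) = 1"
  using mean unfolding left_invariant_mean_def by blast

lemma mean_translate: "bounded_on G f \<Longrightarrow> g \<in> carrier G \<Longrightarrow> m (\<lambda>x. f (g \<otimes>\<^bsub>G\<^esub> x)) = m f"
  using mean unfolding left_invariant_mean_def by blast

lemma mean_cmult: "bounded_on G f \<Longrightarrow> m (\<lambda>x. c * f x) = c * m f"
  using mean_lincomb[of f f c 0] by simp

lemma mean_zero: "m (\<lambda>x. 0) = 0"
  using mean_cmult[of "\<lambda>x. 1" 0] by (simp add: bounded_onI[where B = 1])

lemma mean_sum:
  "(\<And>i. i \<in> S \<Longrightarrow> bounded_on G (f i)) \<Longrightarrow> m (\<lambda>x. \<Sum>i\<in>S. f i x) = (\<Sum>i\<in>S. m (f i))"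
proof (induction S rule: infinite_finite_induct)
  case (insert i S)
  then show ?case
    using mean_lincomb[of "f i" "\<lambda>x. \<Sum>i\<in>S. f i x" 1 1] bounded_on_sum[of S G f] by simp
qed (simp_all add: mean_zero)

lemma mean_mono:
  assumes f: "bounded_on G f" and g: "bounded_on G g"
    and le: "\<And>x. x \<in> carrier G \<Longrightarrow> f x \<le> g x"
  shows "m f \<le> m g"
proof -
  have "0 \<le> m (\<lambda>x. 1 * g x + (-1) * f x)"
    using le by (intro mean_nonneg bounded_on_lincomb f g) simp
  also have "\<dots> = m g - m f"
    using mean_lincomb[OF g f, of 1 "-1"] by simp
  finally show ?thesis
    by simp
qed

lemma mean_cong:
  assumes f: "bounded_on G f" and eq: "\<And>x. x \<in> carrier G \<Longrightarrow> f x = g x"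
  shows "m f = m g"
proof -
  have g: "bounded_on G g"
    using bounded_on_cong[OF f eq] .
  show ?thesis
    using mean_mono[OF f g] mean_mono[OF g f] eq by (simp add: order_antisym)
qed

end

lemma inv_index_nonneg: "0 \<le> inv_index G H"
  unfolding inv_index_def by simp

lemma inv_index_le_one: "inv_index G H \<le> 1"
  unfolding inv_index_def by (auto simp: divide_le_eq_1 Suc_le_eq card_gt_0_iff)

context group
begin

lemma measures_index_uniformly_tendsto:
  assumes "measures_index_uniformly G M" and "x \<in> carrier G" and "subgroup H G"
  shows "(\<lambda>n. measure_pmf.prob (M n) (x <# H)) \<longlonglongrightarrow> inv_index G H"
proof (rule LIMSEQ_I)
  fix r :: real assume "0 < r"
  then show "\<exists>N. \<forall>n\<ge>N. norm (measure_pmf.prob (M n) (x <# H) - inv_index G H) < r"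
    using assms unfolding measures_index_uniformly_def by fastforce
qed

lemma centralizer_subgroup:
  assumes t: "t \<in> carrier G"
  shows "subgroup (centralizer G t) G"
proof (rule subgroupI)
  fix a assume "a \<in> centralizer G t"
  then have a: "a \<in> carrier G" "a \<otimes> t = t \<otimes> a"
    unfolding centralizer_def by auto
  have "inv a \<otimes> t = inv a \<otimes> (t \<otimes> a) \<otimes> inv a"
    using a t by (simp add: m_assoc)
  also have "\<dots> = t \<otimes> inv a"
    using a t by (simp flip: a(2) add: m_assoc[symmetric])
  finally show "inv a \<in> centralizer G t"
    using a unfolding centralizer_def by simp
next
  fix a b assume "a \<in> centralizer G t" "b \<in> centralizer G t"
  then show "a \<otimes> b \<in> centralizer G t"
    using t unfolding centralizer_def by (auto simp: m_assoc) (simp add: m_assoc[symmetric])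
qed (use t in \<open>auto simp: centralizer_def\<close>)

lemma centralizer_mult_central:
  assumes x: "x \<in> carrier G" and z: "z \<in> center G"
  shows "centralizer G (x \<otimes> z) = centralizer G x"
proof -
  have zc: "z \<in> carrier G" "\<And>y. y \<in> carrier G \<Longrightarrow> z \<otimes> y = y \<otimes> z"
    using z unfolding center_def by auto
  have "y \<otimes> (x \<otimes> z) = x \<otimes> z \<otimes> y \<longleftrightarrow> y \<otimes> x = x \<otimes> y" if y: "y \<in> carrier G" for y
  proof -
    have "x \<otimes> z \<otimes> y = x \<otimes> y \<otimes> z"
      using x y zc by (simp add: m_assoc)
    then show ?thesis
      using x y zc by (simp add: m_assoc[symmetric])
  qed
  then show ?thesis
    unfolding centralizer_def by auto
qed

lemma lcosets_eq_lcoset: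
  assumes "subgroup H G" and "C \<in> lcosets H" and "y \<in> C"
  shows "C = y <# H"
  using assms l_repr_independence unfolding LCOSETS_def by blast

lemma sum_indicator_lcosets:
  assumes H: "subgroup H G" and S: "S \<subseteq> lcosets H" "finite S" and y: "y \<in> carrier G"
  shows "(\<Sum>C\<in>S. indicator C y :: real) = (if y <# H \<in> S then 1 else 0)"
proof -
  have "indicator C y = (if C = y <# H then 1 else 0 :: real)" if "C \<in> S" for C
    using lcosets_eq_lcoset[OF H, of C y] lcos_self[OF y H] that S(1)
    by (auto simp: indicator_def)
  then show ?thesis
    using S(2) by (simp add: sum.delta')
qed

context
  fixes m assumes mean: "left_invariant_mean G m"
begin

lemma mean_indicator_lcoset:
  assumes H: "subgroup H G" and g: "g \<in> carrier G"
  shows "m (indicator (g <# H)) = m (indicator H)"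
proof -
  have "indicator (g <# H) x = (indicator H (inv g \<otimes> x) :: real)" if "x \<in> carrier G" for x
  proof -
    have "x \<in> g <# H \<longleftrightarrow> inv g \<otimes> x \<in> H"
      using that g subgroup.lcos_module_imp[OF H is_group g, of x]
        subgroup.lcos_module_rev[OF H is_group g that] by blast
    then show ?thesis
      by (simp add: indicator_def)
  qed
  then have "m (indicator (g <# H)) = m (\<lambda>x. indicator H (inv g \<otimes> x))"
    by (intro mean_cong[OF mean bounded_on_indicator])
  also have "\<dots> = m (indicator H)"
    using g by (intro mean_translate[OF mean bounded_on_indicator]) simp
  finally show ?thesis .
qed

lemma mean_sum_indicator_lcosets:
  assumes H: "subgroup H G" and S: "S \<subseteq> lcosets H"
  shows "m (\<lambda>y. \<Sum>C\<in>S. indicator C y) = real (card S) * m (indicator H)"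
proof -
  have "m (\<lambda>y. \<Sum>C\<in>S. indicator C y) = (\<Sum>C\<in>S. m (indicator C))"
    by (rule mean_sum[OF mean bounded_on_indicator])
  also have "\<dots> = (\<Sum>C\<in>S. m (indicator H))"
    using S mean_indicator_lcoset[OF H] by (intro sum.cong) (auto simp: LCOSETS_def)
  finally show ?thesis
    by simp
qed

lemma mean_indicator_subgroup:
  assumes H: "subgroup H G"
  shows "m (indicator H) = inv_index G H"
proof -
  have bounded: "bounded_on G (\<lambda>y. \<Sum>C\<in>S. indicator C y :: real)" for S
    by (rule bounded_on_sum) (rule bounded_on_indicator)
  have le: "real (card S) * m (indicator H) \<le> 1" if S: "S \<subseteq> lcosets H" "finite S" for S
  proof -
    have "real (card S) * m (indicator H) = m (\<lambda>y. \<Sum>C\<in>S. indicator C y)"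
      using mean_sum_indicator_lcosets[OF H S(1)] by simp
    also have "\<dots> \<le> m (\<lambda>y. 1)"
      using sum_indicator_lcosets[OF H S]
      by (intro mean_mono[OF mean bounded]) (auto intro: bounded_onI[where B = 1])
    finally show ?thesis
      using mean_one[OF mean] by simp
  qed
  show ?thesis
  proof (cases "finite (lcosets H)")
    case True
    have nonempty: "lcosets H \<noteq> {}"
      using one_closed unfolding LCOSETS_def by blast
    have "real (card (lcosets H)) * m (indicator H) = m (\<lambda>y. \<Sum>C\<in>lcosets H. indicator C y)"
      using mean_sum_indicator_lcosets[OF H subset_refl] by simp
    also have "\<dots> = m (\<lambda>y. 1)"
      using sum_indicator_lcosets[OF H subset_refl True]
      by (intro mean_cong[OF mean bounded]) (auto simp: LCOSETS_def)
    finally have "real (card (lcosets H)) * m (indicator H) = 1"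
      using mean_one[OF mean] by simp
    moreover have "card (lcosets H) \<noteq> 0"
      using True nonempty card_eq_0_iff by blast
    ultimately show ?thesis
      using True unfolding inv_index_def by (simp add: field_simps)
  next
    case False
    have "m (indicator H) \<le> 0"
    proof (rule ccontr)
      assume "\<not> m (indicator H) \<le> 0"
      then obtain n where n: "1 < real n * m (indicator H)"
        using reals_Archimedean3[of "m (indicator H)"] by auto
      obtain S where S: "S \<subseteq> lcosets H" "finite S" "card S = n"
        using infinite_arbitrarily_large[OF False] by blast
      show False
        using le[OF S(1,2)] S(3) n by simp
    qed
    moreover have "0 \<le> m (indicator H)"
      by (rule mean_nonneg[OF mean bounded_on_indicator]) simp
    ultimately show ?thesis
      using False unfolding inv_index_def by simp
  qed
qed

end

context
  fixes Z T assumes Z: "subgroup Z G" and T: "left_transversal G Z T"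
begin

lemma left_transversal_ex1_lcoset:
  assumes y: "y \<in> carrier G"
  shows "\<exists>!t. t \<in> T \<and> y \<in> t <# Z"
proof -
  have "y <# Z \<in> lcosets Z"
    using y unfolding LCOSETS_def by blast
  then have "\<exists>!t. t \<in> T \<and> t \<in> y <# Z"
    using T unfolding left_transversal_def by blast
  moreover have "t \<in> y <# Z \<longleftrightarrow> y \<in> t <# Z" if "t \<in> T" for t
    using l_coset_swap[OF _ _ Z] y that T unfolding left_transversal_def by blast
  ultimately show ?thesis
    by blast
qed

lemma finite_left_transversal:
  assumes "finite (lcosets Z)"
  shows "finite T"
proof -
  have T_carrier: "T \<subseteq> carrier G"
    using T unfolding left_transversal_def by blast
  have "inj_on (\<lambda>t. t <# Z) T"
  proof (rule inj_onI)
    fix s t assume st: "s \<in> T" "t \<in> T" "s <# Z = t <# Z"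
    then have "s \<in> s <# Z" "s \<in> t <# Z"
      using lcos_self[OF _ Z] T_carrier by auto
    then show "s = t"
      using left_transversal_ex1_lcoset[of s] st T_carrier by blast
  qed
  moreover have "(\<lambda>t. t <# Z) ` T \<subseteq> lcosets Z"
    using T_carrier unfolding LCOSETS_def by blast
  ultimately show ?thesis
    using assms finite_imageD finite_subset by metis
qed

lemma sum_left_transversal:
  fixes f :: "'a \<Rightarrow> real"
  assumes f: "\<And>x z. x \<in> carrier G \<Longrightarrow> z \<in> Z \<Longrightarrow> f (x \<otimes> z) = f x"
    and fin: "finite (lcosets Z)" and y: "y \<in> carrier G"
  shows "(\<Sum>t\<in>T. f t * indicator (t <# Z) y) = f y"
proof -
  obtain t where t: "t \<in> T" "y \<in> t <# Z" and uniq: "\<And>s. s \<in> T \<Longrightarrow> y \<in> s <# Z \<Longrightarrow> s = t"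
    using left_transversal_ex1_lcoset[OF y] by blast
  have "indicator (s <# Z) y = (if s = t then 1 else 0 :: real)" if "s \<in> T" for s
    using t(2) by (auto simp: indicator_def dest: uniq[OF that])
  then have "(\<Sum>s\<in>T. f s * indicator (s <# Z) y) = (\<Sum>s\<in>T. if s = t then f t else 0)"
    by (intro sum.cong) auto
  also have "\<dots> = f t"
    using finite_left_transversal[OF fin] t(1) by simp
  also have "\<dots> = f y"
    using t T f unfolding left_transversal_def l_coset_def by auto
  finally show ?thesis .
qed

lemma mean_eq_sum_left_transversal:
  fixes m :: "('a \<Rightarrow> real) \<Rightarrow> real" and f :: "'a \<Rightarrow> real"
  assumes mean: "left_invariant_mean G m"
    and f: "\<And>x z. x \<in> carrier G \<Longrightarrow> z \<in> Z \<Longrightarrow> f (x \<otimes> z) = f x"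
    and fin: "finite (lcosets Z)"
  shows "m f = (\<Sum>t\<in>T. f t) / card (lcosets Z)"
proof -
  have T_carrier: "T \<subseteq> carrier G"
    using T unfolding left_transversal_def by blast
  have bounded: "bounded_on G (\<lambda>y. f t * indicator (t <# Z) y)" for t
    by (rule bounded_onI[where B = "\<bar>f t\<bar>"]) (simp add: indicator_def)
  have "m (\<lambda>y. \<Sum>t\<in>T. f t * indicator (t <# Z) y) = m f"
    using sum_left_transversal[of f, OF f fin]
    by (intro mean_cong[OF mean] bounded_on_sum bounded) simp_all
  then have "m f = (\<Sum>t\<in>T. f t * m (indicator (t <# Z)))"
    by (simp add: mean_sum[OF mean bounded] mean_cmult[OF mean bounded_on_indicator])
  also have "\<dots> = (\<Sum>t\<in>T. f t * inv_index G Z)"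
    using T_carrier mean_indicator_lcoset[OF mean Z] mean_indicator_subgroup[OF mean Z]
    by (intro sum.cong) auto
  finally show ?thesis
    using fin unfolding inv_index_def by (simp add: sum_divide_distrib)
qed

lemma integral_eq_sum_left_transversal:
  fixes p :: "'a pmf" and f :: "'a \<Rightarrow> real"
  assumes f: "\<And>x z. x \<in> carrier G \<Longrightarrow> z \<in> Z \<Longrightarrow> f (x \<otimes> z) = f x"
    and fin: "finite (lcosets Z)" and p: "set_pmf p \<subseteq> carrier G"
  shows "(\<integral>x. f x \<partial>p) = (\<Sum>t\<in>T. f t * measure_pmf.prob p (t <# Z))"
proof -
  have "(\<integral>x. f x \<partial>p) = (\<integral>x. (\<Sum>t\<in>T. f t * indicator (t <# Z) x) \<partial>p)"
    using p sum_left_transversal[of f, OF f fin]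
    by (intro integral_cong_AE) (auto simp: AE_measure_pmf_iff)
  also have "\<dots> = (\<Sum>t\<in>T. f t * measure_pmf.prob p (t <# Z))"
    by (subst Bochner_Integration.integral_sum)
      (auto intro: measure_pmf.integrable_const_bound[where B = 1])
  finally show ?thesis .
qed

lemma integral_tendsto_sum_left_transversal:
  fixes M :: "nat \<Rightarrow> 'a pmf" and f :: "'a \<Rightarrow> real"
  assumes M: "measures_index_uniformly G M" "\<And>n. set_pmf (M n) \<subseteq> carrier G"
    and f: "\<And>x z. x \<in> carrier G \<Longrightarrow> z \<in> Z \<Longrightarrow> f (x \<otimes> z) = f x"
    and fin: "finite (lcosets Z)"
  shows "(\<lambda>n. \<integral>x. f x \<partial>M n) \<longlonglongrightarrow> (\<Sum>t\<in>T. f t) / card (lcosets Z)"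
proof -
  have "(\<lambda>n. \<Sum>t\<in>T. f t * measure_pmf.prob (M n) (t <# Z)) \<longlonglongrightarrow> (\<Sum>t\<in>T. f t * inv_index G Z)"
    using T measures_index_uniformly_tendsto[OF M(1) _ Z] unfolding left_transversal_def
    by (intro tendsto_sum tendsto_mult_left) auto
  then show ?thesis
    using integral_eq_sum_left_transversal[of f, OF f fin M(2)] fin
    by (simp add: inv_index_def sum_divide_distrib)
qed

end

lemma dc_mean_eq_mean_inv_index_centralizer:
  assumes mean: "left_invariant_mean G m"
  shows "dc_mean G m = m (\<lambda>y. inv_index G (centralizer G y))"
proof -
  have eq: "inv_index G (centralizer G y) = m (\<lambda>x. if x \<otimes> y = y \<otimes> x then 1 else 0)"
    if y: "y \<in> carrier G" for y
  proof -
    have "inv_index G (centralizer G y) = m (indicator (centralizer G y))"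
      by (rule mean_indicator_subgroup[OF mean centralizer_subgroup[OF y], symmetric])
    also have "\<dots> = m (\<lambda>x. if x \<otimes> y = y \<otimes> x then 1 else 0)"
      by (rule mean_cong[OF mean bounded_on_indicator]) (auto simp: centralizer_def)
    finally show ?thesis .
  qed
  have "bounded_on G (\<lambda>y. inv_index G (centralizer G y))"
    by (rule bounded_onI[where B = 1]) (simp add: inv_index_nonneg inv_index_le_one)
  then have "m (\<lambda>y. inv_index G (centralizer G y)) = dc_mean G m"
    unfolding dc_mean_def by (rule mean_cong[OF mean]) (simp add: eq)
  then show ?thesis ..
qed

lemma comm_prob_eq_integral_centralizer:
  assumes p: "set_pmf p \<subseteq> carrier G"
  shows "comm_prob G p = (\<integral>x. measure_pmf.prob p (centralizer G x) \<partial>p)"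
proof -
  have "measure_pmf.prob p {y. x \<otimes> y = y \<otimes> x} = measure_pmf.prob p (centralizer G x)"
    if "x \<in> set_pmf p" for x
  proof -
    have "{y. x \<otimes> y = y \<otimes> x} \<inter> set_pmf p = centralizer G x \<inter> set_pmf p"
      using p that by (auto simp: centralizer_def)
    then show ?thesis
      by (metis measure_Int_set_pmf)
  qed
  then show ?thesis
    unfolding comm_prob_def measure_pair_pmf
    by (intro integral_cong_AE) (auto simp: AE_measure_pmf_iff)
qed

lemma comm_prob_minus_integral_inv_index_tendsto_zero:
  assumes M: "measures_index_uniformly G M" "\<And>n. set_pmf (M n) \<subseteq> carrier G"
  shows "(\<lambda>n. comm_prob G (M n) - (\<integral>x. inv_index G (centralizer G x) \<partial>M n)) \<longlonglongrightarrow> 0"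
proof (rule LIMSEQ_I)
  fix r :: real assume r: "0 < r"
  then obtain N where N: "\<And>n x H. n \<ge> N \<Longrightarrow> x \<in> carrier G \<Longrightarrow> subgroup H G \<Longrightarrow>
      \<bar>measure_pmf.prob (M n) (x <# H) - inv_index G H\<bar> < r / 2"
    using M(1) unfolding measures_index_uniformly_def by (meson half_gt_zero)
  have "\<bar>comm_prob G (M n) - (\<integral>x. inv_index G (centralizer G x) \<partial>M n)\<bar> \<le> r / 2"
    if n: "n \<ge> N" for n
  proof -
    have "\<bar>measure_pmf.prob (M n) (centralizer G x) - inv_index G (centralizer G x)\<bar> \<le> r / 2"
      if "x \<in> set_pmf (M n)" for x
    proof -
      have x: "x \<in> carrier G"
        using that M(2) by blast
      have "\<one> <# centralizer G x = centralizer G x"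
        using centralizer_subgroup[OF x] by (simp add: lcos_mult_one subgroup.subset)
      then show ?thesis
        using N[OF n one_closed centralizer_subgroup[OF x]] by simp
    qed
    then show ?thesis
      unfolding comm_prob_eq_integral_centralizer[OF M(2)]
      by (intro integral_pmf_dist_le[where B = 1])
        (simp_all add: inv_index_nonneg inv_index_le_one)
  qed
  then show "\<exists>N. \<forall>n\<ge>N. norm (comm_prob G (M n) - (\<integral>x. inv_index G (centralizer G x) \<partial>M n) - 0) < r"
    using r by (intro exI[of _ N]) (auto intro: le_less_trans[where y = "r / 2"])
qed

end

theorem proposition7p1:
  fixes G :: "('a, 'b) monoid_scheme" and Z T :: "'a set"
  assumes "group G"
    and "countable (carrier G)"
    and "subgroup Z G" and "Z \<subseteq> center G"
    and "finite (lcosets\<^bsub>G\<^esub> Z)"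
    and "left_transversal G Z T"
  shows "(\<forall>m. left_invariant_mean G m \<longrightarrow>
            dc_mean G m = (1 / real (card (lcosets\<^bsub>G\<^esub> Z))) * (\<Sum>t\<in>T. inv_index G (centralizer G t)))
       \<and> (\<forall>M :: nat \<Rightarrow> 'a pmf. (\<forall>n. set_pmf (M n) \<subseteq> carrier G) \<and> measures_index_uniformly G M \<longrightarrow>
            dc_seq G M = ereal ((1 / real (card (lcosets\<^bsub>G\<^esub> Z))) * (\<Sum>t\<in>T. inv_index G (centralizer G t)))
          \<and> (\<lambda>n. comm_prob G (M n)) \<longlonglongrightarrow> (1 / real (card (lcosets\<^bsub>G\<^esub> Z))) * (\<Sum>t\<in>T. inv_index G (centralizer G t)))"
proof -
  interpret group G by fact
  define c where "c x = inv_index G (centralizer G x)" for x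
  have c_invariant: "c (x \<otimes>\<^bsub>G\<^esub> z) = c x" if "x \<in> carrier G" "z \<in> Z" for x z
    using centralizer_mult_central[of x z] that assms(4) unfolding c_def by (simp add: subsetD)
  note transversal = assms(3,6) and fin = assms(5)
  have "dc_mean G m = (\<Sum>t\<in>T. c t) / card (lcosets\<^bsub>G\<^esub> Z)" if mean: "left_invariant_mean G m" for m
  proof -
    have "m c = (\<Sum>t\<in>T. c t) / card (lcosets\<^bsub>G\<^esub> Z)"
      by (rule mean_eq_sum_left_transversal[OF transversal mean c_invariant fin])
    then show ?thesis
      using dc_mean_eq_mean_inv_index_centralizer[OF mean] unfolding c_def by simp
  qed
  moreover have "(\<lambda>n. comm_prob G (M n)) \<longlonglongrightarrow> (\<Sum>t\<in>T. c t) / card (lcosets\<^bsub>G\<^esub> Z)"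
    if M: "measures_index_uniformly G M" "\<And>n. set_pmf (M n) \<subseteq> carrier G" for M
  proof (rule Lim_transform)
    show "(\<lambda>n. \<integral>x. c x \<partial>M n) \<longlonglongrightarrow> (\<Sum>t\<in>T. c t) / card (lcosets\<^bsub>G\<^esub> Z)"
      by (rule integral_tendsto_sum_left_transversal[OF transversal M c_invariant fin])
    show "(\<lambda>n. comm_prob G (M n) - (\<integral>x. c x \<partial>M n)) \<longlonglongrightarrow> 0"
      using comm_prob_minus_integral_inv_index_tendsto_zero[OF M] unfolding c_def .
  qed
  moreover have "1 / real (card (lcosets\<^bsub>G\<^esub> Z)) * (\<Sum>t\<in>T. inv_index G (centralizer G t))
      = (\<Sum>t\<in>T. c t) / card (lcosets\<^bsub>G\<^esub> Z)"
    unfolding c_def by simp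
  ultimately show ?thesis
    unfolding dc_seq_def
    by (auto intro: lim_imp_Limsup[OF trivial_limit_sequentially tendsto_ereal])
qed

end
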